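(* Let $m,n,k$ be positive integers with $(m,k-1)=1$ and $n=\mathrm{ind}_m(k)$, let $G=G(m,n,k)=\langle a,b;\ a^m=1,\ b^n=1,\ b^{-1}ab=a^k\rangle$, $R=\{k_j:j\in\mathbb{Z}_n\}$ and $L=\{-k_j:j\in\mathbb{Z}_n\}$. (i) If $\mathrm{orb}(x,R^* )$ is basic for every $x\in R^*$, then $\mathrm{P}(G)=\dot{\bigcup}_{x\in R^*}C(x,1)$ and $|\mathrm{P}(G)|=|R^*|\,m$. (ii) If $\mathrm{orb}(x,L^* )$ is basic for every $x\in L^*$, then $\Lambda(G)=\dot{\bigcup}_{x\in L^*}C(x,1)$ and $|\Lambda(G)|=|L^*|\,m$.
   Context: $\mathrm{ind}_m(k)$ is the least positive integer $d$ with $k^d\equiv1\pmod m$; $k_t=k^t-1\pmod m$. Elements of $G$ are written uniquely as $a^ib^j$, $i\in\mathbb{Z}_m$, $j\in\mathbb{Z}_n$. Commutators are $[x,y]=x^{-1}y^{-1}xy$; $(x)\rho(g)=[x,g]$, $(x)\lambda(g)=[g,x]$; maps are written on the right and composed left to right; $\mathrm{P}(G)$ and $\Lambda(G)$ are the semigroups generated by all $\rho(g)$, resp. all $\lambda(g)$. For $x,y\in\mathbb{Z}_m$, the map $\mu(x,y):G\to G$ is $(a^ib^j)\mu(x,y)=a^{xik^j-yk_j}$, and $C(x,y)=\{\mu(x,yz):z\in\mathbb{Z}_m\}$. For $S\subseteq\mathbb{Z}_m$, $S^*$ is the multiplicative subsemigroup of $\mathbb{Z}_m$ generated by $S$ and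 $I(S^* )$ is its set of elements invertible in $\mathbb{Z}_m$; $\mathrm{orb}(x,S^* )=\{xy:y\in I(S^* )\}$, and it is basic if it meets $S$. *)

theory Defs
  imports "HOL-Algebra.Group" "HOL-Library.FuncSet" "HOL-Number_Theory.Cong"
begin

definition is_ind :: "nat \<Rightarrow> nat \<Rightarrow> nat \<Rightarrow> bool" where
  "is_ind m k n \<longleftrightarrow> n > 0 \<and> [k ^ n = 1] (mod m) \<and> (\<forall>d. 0 < d \<and> d < n \<longrightarrow> \<not> [k ^ d = 1] (mod m))"

definition kk :: "nat \<Rightarrow> nat \<Rightarrow> nat \<Rightarrow> int" where
  "kk m k t = (int k ^ t - 1) mod int m"

text \<open>The group G(m,n,k): the pair (i,j) stands for a^i b^j, with i in Z_m, j in Z_n.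
  Since b^{-1} a b = a^k and k^n = 1 (mod m), we have b^j a^i' = a^(i' k^(n-j)) b^j.\<close>
definition Gmul :: "nat \<Rightarrow> nat \<Rightarrow> nat \<Rightarrow> int \<times> int \<Rightarrow> int \<times> int \<Rightarrow> int \<times> int" where
  "Gmul m n k p q =
     ((fst p + fst q * int k ^ nat ((int n - snd p) mod int n)) mod int m,
      (snd p + snd q) mod int n)"

definition Gmnk :: "nat \<Rightarrow> nat \<Rightarrow> nat \<Rightarrow> (int \<times> int) monoid" where
  "Gmnk m n k = \<lparr>carrier = {0..<int m} \<times> {0..<int n}, monoid.mult = Gmul m n k, one = (0, 0)\<rparr>"

definition commu :: "('a, 'b) monoid_scheme \<Rightarrow> 'a \<Rightarrow> 'a \<Rightarrow> 'a" where
  "commu G x y = inv\<^bsub>G\<^esub> x \<otimes>\<^bsub>G\<^esub> inv\<^bsub>G\<^esub> y \<otimes>\<^bsub>G\<^esub> x \<otimes>\<^bsub>G\<^esub> y"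

definition rho :: "('a, 'b) monoid_scheme \<Rightarrow> 'a \<Rightarrow> ('a \<Rightarrow> 'a)" where
  "rho G g = (\<lambda>x\<in>carrier G. commu G x g)"

definition lam :: "('a, 'b) monoid_scheme \<Rightarrow> 'a \<Rightarrow> ('a \<Rightarrow> 'a)" where
  "lam G g = (\<lambda>x\<in>carrier G. commu G g x)"

text \<open>Semigroup (under composition of maps A -> A, written on the right, i.e. first f then g)
  generated by a set S of maps.\<close>
inductive_set map_sgrp :: "'a set \<Rightarrow> ('a \<Rightarrow> 'a) set \<Rightarrow> ('a \<Rightarrow> 'a) set"
  for A :: "'a set" and S :: "('a \<Rightarrow> 'a) set" where
  gen: "f \<in> S \<Longrightarrow> f \<in> map_sgrp A S"
| comp: "f \<in> map_sgrp A S \<Longrightarrow> g \<in> map_sgrp A S \<Longrightarrow> compose A g f \<in> map_sgrp A S"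

definition PG :: "('a, 'b) monoid_scheme \<Rightarrow> ('a \<Rightarrow> 'a) set" where
  "PG G = map_sgrp (carrier G) (rho G ` carrier G)"

definition LG :: "('a, 'b) monoid_scheme \<Rightarrow> ('a \<Rightarrow> 'a) set" where
  "LG G = map_sgrp (carrier G) (lam G ` carrier G)"

definition mu :: "nat \<Rightarrow> nat \<Rightarrow> nat \<Rightarrow> int \<Rightarrow> int \<Rightarrow> (int \<times> int \<Rightarrow> int \<times> int)" where
  "mu m n k x y = (\<lambda>p\<in>carrier (Gmnk m n k).
      ((x * fst p * int k ^ nat (snd p) - y * kk m k (nat (snd p))) mod int m, 0))"

definition Cset :: "nat \<Rightarrow> nat \<Rightarrow> nat \<Rightarrow> int \<Rightarrow> int \<Rightarrow> (int \<times> int \<Rightarrow> int \<times> int) set" where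
  "Cset m n k x y = {mu m n k x ((y * z) mod int m) | z. z \<in> {0..<int m}}"

inductive_set mult_sgrp :: "nat \<Rightarrow> int set \<Rightarrow> int set" for m :: nat and S :: "int set" where
  gen: "s \<in> S \<Longrightarrow> s mod int m \<in> mult_sgrp m S"
| mul: "a \<in> mult_sgrp m S \<Longrightarrow> b \<in> mult_sgrp m S \<Longrightarrow> (a * b) mod int m \<in> mult_sgrp m S"

definition units_in :: "nat \<Rightarrow> int set \<Rightarrow> int set" where
  "units_in m T = {x \<in> T. coprime x (int m)}"

definition orb :: "nat \<Rightarrow> int \<Rightarrow> int set \<Rightarrow> int set" where
  "orb m x T = {(x * y) mod int m | y. y \<in> units_in m T}"

definition basic :: "nat \<Rightarrow> int set \<Rightarrow> int \<Rightarrow> bool" where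
  "basic m S x \<longleftrightarrow> orb m x (mult_sgrp m S) \<inter> S \<noteq> {}"

definition Rset :: "nat \<Rightarrow> nat \<Rightarrow> nat \<Rightarrow> int set" where
  "Rset m n k = kk m k ` {0..<n}"

definition Lset :: "nat \<Rightarrow> nat \<Rightarrow> nat \<Rightarrow> int set" where
  "Lset m n k = (\<lambda>t. (- kk m k t) mod int m) ` {0..<n}"

end

theory Submission
  imports Defs "HOL-Number_Theory.Residues"
begin

(* Write a^i b^j as (i, j). The commutator [a^i b^j, a^s b^t] equals
   a^(i k^j k_t - s k^t k_j), so rho(a^s b^t) = mu(k_t, s k^t) and
   lambda(a^s b^t) = mu(-k_t, -s k^t): the generators of P(G), resp. Lambda(G), are exactly the
   maps in C(r, 1) with r in R, resp. L. Such maps compose as mu(x, y) mu(x', y') = mu(x x', x' y),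
   so the generated semigroup lies in the union of the C(x, 1) with x in S^*. Conversely, if
   x u lies in S for a unit u of S^*, then composing a generator mu(x u, u z) with any element
   mu(u^-1, y) of the semigroup gives mu(x, z). Finally (m, k - 1) = 1 makes (x, y) |-> mu(x, y)
   injective on Z_m x Z_m, which yields disjointness and the count |S^*| m. *)

lemma mult_sgrp_mod: "x \<in> mult_sgrp m S \<Longrightarrow> x mod int m = x"
  by (induction rule: mult_sgrp.induct) simp_all

lemma mult_sgrp_range: "0 < m \<Longrightarrow> x \<in> mult_sgrp m S \<Longrightarrow> x \<in> {0..<int m}"
  by (metis atLeastLessThan_iff mult_sgrp_mod of_nat_0_less_iff pos_mod_bound pos_mod_sign)

lemma mult_sgrp_power:
  assumes "x \<in> mult_sgrp m S" and "0 < N"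
  shows "x ^ N mod int m \<in> mult_sgrp m S"
  using assms(2)
proof (induction N rule: nat_induct_non_zero)
  case 1
  then show ?case
    using assms(1) by (simp add: mult_sgrp_mod)
next
  case (Suc N)
  from mult_sgrp.mul[OF assms(1) Suc.IH] show ?case
    by (simp add: mod_mult_right_eq)
qed

lemma mult_sgrp_unit_inverse:
  assumes "0 < m" and u: "u \<in> mult_sgrp m S" and "coprime u (int m)"
  shows "\<exists>v \<in> mult_sgrp m S. [u * v = 1] (mod int m)"
proof -
  define N where "N = totient m"
  have "0 \<le> u"
    using mult_sgrp_range[OF assms(1) u] by simp
  with assms(3) have "[nat u ^ N = 1] (mod m)"
    unfolding N_def by (intro euler_theorem) (metis coprime_int_iff int_nat_eq)
  with \<open>0 \<le> u\<close> have unit: "[u ^ N = 1] (mod int m)"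
    by (metis cong_int_iff int_nat_eq of_nat_1 of_nat_power)
  have "0 < N"
    using assms(1) by (simp add: N_def)
  then have "[u * (u ^ (2 * N - 1) mod int m) = u ^ N * u ^ N] (mod int m)"
    by (simp add: cong_def mod_mult_right_eq power_add [symmetric] power_Suc [symmetric] mult_2)
  also have "[u ^ N * u ^ N = 1 * 1] (mod int m)"
    by (intro cong_mult unit)
  finally show ?thesis
    using mult_sgrp_power[OF u, of "2 * N - 1"] \<open>0 < N\<close> by auto
qed

locale metacyclic =
  fixes m n k :: nat
  assumes m_pos: "0 < m" and n_pos: "0 < n" and k_pow_n: "[k ^ n = 1] (mod m)"
begin

abbreviation G where "G \<equiv> Gmnk m n k"

definition kpow :: "int \<Rightarrow> int" where
  "kpow e = int k ^ nat (e mod int n)"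

definition reduce :: "int \<times> int \<Rightarrow> int \<times> int" where
  "reduce p = (fst p mod int m, snd p mod int n)"

lemma int_k_pow_mod_n: "[int k ^ (e mod n) = int k ^ e] (mod int m)"
proof -
  have kn: "[int k ^ n = 1] (mod int m)"
    using k_pow_n by (metis cong_int_iff of_nat_1 of_nat_power)
  have "int k ^ e = (int k ^ n) ^ (e div n) * int k ^ (e mod n)"
    by (simp flip: power_mult power_add)
  also have "[\<dots> = 1 ^ (e div n) * int k ^ (e mod n)] (mod int m)"
    by (intro cong_mult cong_pow kn cong_refl)
  finally show ?thesis
    by (simp add: cong_sym)
qed

lemma kpow_mod [simp]: "kpow (e mod int n) = kpow e"
  by (simp add: kpow_def)

lemma kpow_uminus_mod [simp]: "kpow (- (e mod int n)) = kpow (- e)"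
  by (metis kpow_mod mod_minus_eq)

lemma kpow_zero [simp]: "kpow 0 = 1"
  by (simp add: kpow_def)

lemma kpow_int: "[kpow (int e) = int k ^ e] (mod int m)"
  unfolding kpow_def of_nat_mod [symmetric] nat_int by (rule int_k_pow_mod_n)

lemma kpow_eq_power: "0 \<le> e \<Longrightarrow> e < int n \<Longrightarrow> kpow e = int k ^ nat e"
  by (simp add: kpow_def)

lemma kpow_add: "[kpow (a + b) = kpow a * kpow b] (mod int m)"
proof -
  define r s where "r = nat (a mod int n)" and "s = nat (b mod int n)"
  have r: "a mod int n = int r" and s: "b mod int n = int s"
    using n_pos by (simp_all add: r_def s_def)
  have "(a + b) mod int n = (int r + int s) mod int n"
    by (metis mod_add_eq r s)
  then have "kpow (a + b) = kpow (int (r + s))"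
    by (metis kpow_mod of_nat_add)
  also have "[\<dots> = int k ^ r * int k ^ s] (mod int m)"
    by (metis kpow_int power_add)
  also have "int k ^ r * int k ^ s = kpow a * kpow b"
    by (simp add: kpow_def r_def s_def)
  finally show ?thesis .
qed

lemma reduce_eqI:
  "[a = a'] (mod int m) \<Longrightarrow> [b = b'] (mod int n) \<Longrightarrow> reduce (a, b) = reduce (a', b')"
  by (simp add: reduce_def cong_def)

lemma reduce_fst_snd [simp]:
  "fst (reduce p) = fst p mod int m" "snd (reduce p) = snd p mod int n"
  by (simp_all add: reduce_def)

lemma carrier_G: "carrier G = {0..<int m} \<times> {0..<int n}"
  by (simp add: Gmnk_def)

lemma one_G: "\<one>\<^bsub>G\<^esub> = (0, 0)"
  by (simp add: Gmnk_def)

lemma reduce_in_carrier: "reduce p \<in> carrier G"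
  using m_pos n_pos by (simp add: reduce_def carrier_G)

lemma reduce_carrier: "p \<in> carrier G \<Longrightarrow> reduce p = p"
  by (auto simp: reduce_def carrier_G)

lemma mult_G: "p \<otimes>\<^bsub>G\<^esub> q = reduce (fst p + fst q * kpow (- snd p), snd p + snd q)"
proof -
  have "(int n - snd p) mod int n = (- snd p) mod int n"
    by (metis diff_conv_add_uminus add.commute mod_add_self2)
  then show ?thesis
    by (simp add: Gmnk_def Gmul_def reduce_def kpow_def)
qed

lemma mult_reduce_left [simp]: "reduce p \<otimes>\<^bsub>G\<^esub> q = p \<otimes>\<^bsub>G\<^esub> q"
  unfolding mult_G by (rule reduce_eqI) (simp_all add: cong_def mod_simps)

lemma mult_reduce_right [simp]: "p \<otimes>\<^bsub>G\<^esub> reduce q = p \<otimes>\<^bsub>G\<^esub> q"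
proof -
  have "[fst p + fst q mod int m * kpow (- snd p) = fst p + fst q * kpow (- snd p)] (mod int m)"
    by (intro cong_add cong_mult cong_refl) (simp add: cong_def)
  then show ?thesis
    unfolding mult_G reduce_fst_snd by (rule reduce_eqI) (simp add: cong_def mod_add_right_eq)
qed

lemma left_inverse_G: "reduce (- fst p * kpow (snd p), - snd p) \<otimes>\<^bsub>G\<^esub> p = \<one>\<^bsub>G\<^esub>"
  by (simp only: mult_reduce_left) (simp add: mult_G one_G reduce_def)

lemma group_G: "group G"
proof (rule groupI)
  fix x y z :: "int \<times> int"
  have "[fst z * kpow (- snd x + - snd y) = fst z * (kpow (- snd x) * kpow (- snd y))] (mod int m)"
    by (intro cong_mult cong_refl kpow_add)
  then have "[fst x + fst y * kpow (- snd x) + fst z * kpow (- snd x + - snd y)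
      = fst x + fst y * kpow (- snd x) + fst z * (kpow (- snd x) * kpow (- snd y))] (mod int m)"
    by (rule cong_add[OF cong_refl])
  then show "x \<otimes>\<^bsub>G\<^esub> y \<otimes>\<^bsub>G\<^esub> z = x \<otimes>\<^bsub>G\<^esub> (y \<otimes>\<^bsub>G\<^esub> z)"
    unfolding mult_G[of x y] mult_G[of y z] mult_reduce_left mult_reduce_right
    by (simp add: mult_G reduce_eqI algebra_simps)
next
  fix x assume "x \<in> carrier G"
  then show "\<one>\<^bsub>G\<^esub> \<otimes>\<^bsub>G\<^esub> x = x"
    by (simp add: one_G mult_G reduce_carrier)
  show "\<exists>y \<in> carrier G. y \<otimes>\<^bsub>G\<^esub> x = \<one>\<^bsub>G\<^esub>"
    using left_inverse_G reduce_in_carrier by blast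
qed (simp_all add: one_G carrier_G m_pos n_pos mult_G reduce_in_carrier[unfolded carrier_G])

lemma inv_G: "p \<in> carrier G \<Longrightarrow> inv\<^bsub>G\<^esub> p = reduce (- fst p * kpow (snd p), - snd p)"
  by (rule group.inv_equality[OF group_G left_inverse_G _ reduce_in_carrier])

lemma commu_G:
  assumes "p \<in> carrier G" "q \<in> carrier G"
  shows "commu G p q = reduce (fst p * kpow (snd p) * (kpow (snd q) - 1)
                              - fst q * kpow (snd q) * (kpow (snd p) - 1), 0)"
proof -
  obtain i j s t where p: "p = (i, j)" and q: "q = (s, t)"
    by fastforce
  have "commu G p q = reduce (- i * kpow j, - j) \<otimes>\<^bsub>G\<^esub> reduce (- s * kpow t, - t) \<otimes>\<^bsub>G\<^esub> p \<otimes>\<^bsub>G\<^esub> q"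
    using assms unfolding commu_def p q by (simp add: inv_G)
  also have "reduce (- i * kpow j, - j) \<otimes>\<^bsub>G\<^esub> reduce (- s * kpow t, - t)
      = reduce (- i * kpow j - s * kpow t * kpow j, - j - t)"
    by (simp only: mult_reduce_left mult_reduce_right) (simp add: mult_G algebra_simps)
  also have "\<dots> \<otimes>\<^bsub>G\<^esub> p = reduce (- i * kpow j - s * kpow t * kpow j + i * kpow (j + t), - t)"
    unfolding p by (simp only: mult_reduce_left) (simp add: mult_G algebra_simps)
  also have "\<dots> \<otimes>\<^bsub>G\<^esub> q = reduce (- i * kpow j - s * kpow t * kpow j + i * kpow (j + t) + s * kpow t, 0)"
    unfolding q by (simp only: mult_reduce_left) (simp add: mult_G)
  also have "\<dots> = reduce (i * kpow j * (kpow t - 1) - s * kpow t * (kpow j - 1), 0)"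
  proof (rule reduce_eqI)
    have "[i * kpow (j + t) = i * (kpow j * kpow t)] (mod int m)"
      by (rule cong_mult[OF cong_refl kpow_add])
    then have "[- i * kpow j - s * kpow t * kpow j + i * kpow (j + t) + s * kpow t
        = - i * kpow j - s * kpow t * kpow j + i * (kpow j * kpow t) + s * kpow t] (mod int m)"
      by (rule cong_add[OF cong_add[OF cong_refl] cong_refl])
    then show "[- i * kpow j - s * kpow t * kpow j + i * kpow (j + t) + s * kpow t
        = i * kpow j * (kpow t - 1) - s * kpow t * (kpow j - 1)] (mod int m)"
      by (simp add: algebra_simps)
  qed simp
  finally show ?thesis
    using p q by simp
qed

lemma kpow_inverse: "[kpow (- e) * kpow e = 1] (mod int m)"
  using kpow_add[of "- e" e] by (simp add: cong_sym)

lemma mu_apply: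
  assumes "p \<in> carrier G"
  shows "mu m n k x y p = reduce (x * fst p * kpow (snd p) - y * (kpow (snd p) - 1), 0)"
proof -
  have kpow_p: "kpow (snd p) = int k ^ nat (snd p)"
    using assms by (auto simp: carrier_G kpow_eq_power)
  have "[x * fst p * int k ^ nat (snd p) - y * kk m k (nat (snd p))
      = x * fst p * kpow (snd p) - y * (kpow (snd p) - 1)] (mod int m)"
    unfolding kk_def kpow_p by (intro cong_diff cong_mult cong_refl) (simp add: cong_def)
  then show ?thesis
    using assms by (simp add: mu_def reduce_def cong_def)
qed

lemma mu_extensional: "mu m n k x y \<in> extensional (carrier G)"
  by (simp add: mu_def)

lemma mu_in_carrier: "p \<in> carrier G \<Longrightarrow> mu m n k x y p \<in> carrier G"
  by (simp add: mu_apply reduce_in_carrier)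

lemma mu_cong:
  assumes "[x = x'] (mod int m)" "[y = y'] (mod int m)"
  shows "mu m n k x y = mu m n k x' y'"
proof (rule extensionalityI[OF mu_extensional mu_extensional])
  fix p assume p: "p \<in> carrier G"
  show "mu m n k x y p = mu m n k x' y' p"
    unfolding mu_apply[OF p] using assms by (intro reduce_eqI cong_diff cong_mult cong_refl) simp_all
qed

lemma compose_mu:
  "compose (carrier G) (mu m n k x' y') (mu m n k x y) = mu m n k (x * x') (x' * y)"
proof (rule extensionalityI[OF compose_extensional mu_extensional])
  fix p assume p: "p \<in> carrier G"
  let ?X = "x * fst p * kpow (snd p) - y * (kpow (snd p) - 1)"
  have "compose (carrier G) (mu m n k x' y') (mu m n k x y) p = reduce (x' * (?X mod int m), 0)"
    using mu_in_carrier[OF p] by (simp add: compose_def p mu_apply[OF p] mu_apply)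
  also have "\<dots> = reduce (x' * ?X, 0)"
    by (intro reduce_eqI cong_mult cong_refl) (simp_all add: cong_def)
  also have "\<dots> = mu m n k (x * x') (x' * y) p"
    by (simp add: mu_apply[OF p] algebra_simps)
  finally show "compose (carrier G) (mu m n k x' y') (mu m n k x y) p = mu m n k (x * x') (x' * y) p" .
qed

lemma Cset_one: "Cset m n k x 1 = mu m n k x ` {0..<int m}"
proof -
  have "Cset m n k x 1 = (\<lambda>z. mu m n k x (z mod int m)) ` {0..<int m}"
    unfolding Cset_def Setcompr_eq_image by simp
  also have "\<dots> = mu m n k x ` {0..<int m}"
    by (rule image_cong) simp_all
  finally show ?thesis .
qed

lemma rho_G:
  assumes "p \<in> carrier G"
  shows "rho G p = mu m n k (kpow (snd p) - 1) (fst p * kpow (snd p))"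
proof (rule extensionalityI[OF _ mu_extensional])
  show "rho G p \<in> extensional (carrier G)"
    by (simp add: rho_def)
  fix q assume "q \<in> carrier G"
  with assms show "rho G p q = mu m n k (kpow (snd p) - 1) (fst p * kpow (snd p)) q"
    unfolding rho_def by (simp add: commu_G mu_apply, simp add: algebra_simps)
qed

lemma lam_G:
  assumes "p \<in> carrier G"
  shows "lam G p = mu m n k (1 - kpow (snd p)) (- fst p * kpow (snd p))"
proof (rule extensionalityI[OF _ mu_extensional])
  show "lam G p \<in> extensional (carrier G)"
    by (simp add: lam_def)
  fix q assume "q \<in> carrier G"
  with assms show "lam G p q = mu m n k (1 - kpow (snd p)) (- fst p * kpow (snd p)) q"
    unfolding lam_def by (simp add: commu_G mu_apply, simp add: algebra_simps)
qed

lemma kk_cong_kpow: "t < n \<Longrightarrow> [kk m k t = kpow (int t) - 1] (mod int m)"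
  by (simp add: kk_def kpow_eq_power cong_def)

(* u = 1 gives the maps rho(g), u = -1 the maps lambda(g). *)
lemma mu_family_image:
  assumes "u * u = 1"
  shows "(\<lambda>p. mu m n k (u * (kpow (snd p) - 1)) (u * fst p * kpow (snd p))) ` carrier G
       = (\<Union>r \<in> (\<lambda>t. (u * kk m k t) mod int m) ` {0..<n}. Cset m n k r 1)"
    (is "?f ` carrier G = ?U")
proof
  have coeff: "[u * (kpow (int t) - 1) = (u * kk m k t) mod int m] (mod int m)" if "t < n" for t
    using kk_cong_kpow[OF that] by (metis cong_mod_right cong_mult cong_refl cong_sym)
  show "?f ` carrier G \<subseteq> ?U"
  proof clarify
    fix s t assume "(s, t) \<in> carrier G"
    then have t: "t = int (nat t)" "nat t < n"
      by (auto simp: carrier_G)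
    have "?f (s, t) = mu m n k ((u * kk m k (nat t)) mod int m) ((u * s * kpow t) mod int m)"
      using coeff[OF t(2)] t(1) by (intro mu_cong) (simp_all add: cong_def)
    then show "?f (s, t) \<in> ?U"
      using t(2) m_pos by (auto simp: Cset_one intro!: bexI[of _ "nat t"])
  qed
  show "?U \<subseteq> ?f ` carrier G"
    unfolding Cset_one
  proof clarify
    fix t z assume t: "t \<in> {0..<n}" and z: "z \<in> {0..<int m}"
    define p where "p = reduce (u * z * kpow (- int t), int t)"
    have p: "p \<in> carrier G"
      unfolding p_def by (rule reduce_in_carrier)
    have snd_p: "snd p = int t"
      using t by (simp add: p_def)
    have "[u * fst p * kpow (int t) = u * (u * z * kpow (- int t)) * kpow (int t)] (mod int m)"
      unfolding p_def by (intro cong_mult cong_refl) (simp add: cong_def)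
    also have "u * (u * z * kpow (- int t)) * kpow (int t) = u * u * z * (kpow (- int t) * kpow (int t))"
      by (simp only: ac_simps)
    also have "[u * u * z * (kpow (- int t) * kpow (int t)) = u * u * z * 1] (mod int m)"
      by (rule cong_mult[OF cong_refl kpow_inverse])
    also have "u * u * z * 1 = z"
      using assms by simp
    finally have "?f p = mu m n k ((u * kk m k t) mod int m) z"
      using coeff[of t] t snd_p by (intro mu_cong) simp_all
    from image_eqI[where f = ?f, OF this[symmetric] p]
    show "mu m n k ((u * kk m k t) mod int m) z \<in> ?f ` carrier G" .
  qed
qed

lemma rho_image: "rho G ` carrier G = (\<Union>r \<in> Rset m n k. Cset m n k r 1)"
proof -
  have "rho G ` carrier G = (\<lambda>p. mu m n k (1 * (kpow (snd p) - 1)) (1 * fst p * kpow (snd p))) ` carrier G"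
    by (simp add: rho_G cong: image_cong)
  also have "\<dots> = (\<Union>r \<in> (\<lambda>t. (1 * kk m k t) mod int m) ` {0..<n}. Cset m n k r 1)"
    by (rule mu_family_image) simp
  finally show ?thesis
    by (simp add: Rset_def kk_def)
qed

lemma lam_image: "lam G ` carrier G = (\<Union>r \<in> Lset m n k. Cset m n k r 1)"
proof -
  have "lam G ` carrier G = (\<lambda>p. mu m n k (- 1 * (kpow (snd p) - 1)) (- 1 * fst p * kpow (snd p))) ` carrier G"
    by (simp add: lam_G cong: image_cong)
  also have "\<dots> = (\<Union>r \<in> (\<lambda>t. (- 1 * kk m k t) mod int m) ` {0..<n}. Cset m n k r 1)"
    by (rule mu_family_image) simp
  finally show ?thesis
    by (simp add: Lset_def)
qed

lemma n_gt_1: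
  assumes "coprime (int k - 1) (int m)" and "m > 1"
  shows "n > 1"
proof (rule ccontr)
  assume "\<not> n > 1"
  with n_pos have "n = 1"
    by simp
  then have "[int k = 1] (mod int m)"
    using k_pow_n by (metis cong_int_iff of_nat_1 power_one_right)
  then have "int m dvd int k - 1"
    by (simp add: cong_iff_dvd_diff)
  with assms(1) have "is_unit (int m)"
    by (meson coprime_common_divisor dvd_refl)
  with assms(2) show False
    by simp
qed

lemma mu_inj_on:
  assumes "coprime (int k - 1) (int m)"
  shows "inj_on (\<lambda>(x, y). mu m n k x y) ({0..<int m} \<times> {0..<int m})"
proof (cases "m = 1")
  case True
  then show ?thesis
    by (auto intro: inj_onI)
next
  case False
  with m_pos have "m > 1"
    by simp
  with assms have "n > 1"
    by (rule n_gt_1)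
  with \<open>m > 1\<close> have a: "(1, 0) \<in> carrier G" and b: "(0, 1) \<in> carrier G"
    by (simp_all add: carrier_G)
  have kpow_1: "kpow 1 = int k"
    using \<open>n > 1\<close> by (simp add: kpow_def)
  (* Evaluating mu(x, y) at a recovers x, at b it gives -y (k - 1). *)
  show ?thesis
  proof (rule inj_onI, clarify)
    fix x y x' y' :: int
    assume range: "x \<in> {0..<int m}" "y \<in> {0..<int m}" "x' \<in> {0..<int m}" "y' \<in> {0..<int m}"
      and eq: "mu m n k x y = mu m n k x' y'"
    have "[x = x'] (mod int m)"
      using fun_cong[OF eq, of "(1, 0)"] by (simp add: mu_apply[OF a] reduce_def cong_def)
    moreover have "[- y * (int k - 1) = - y' * (int k - 1)] (mod int m)"
      using fun_cong[OF eq, of "(0, 1)"] by (simp add: mu_apply[OF b] kpow_1 reduce_def cong_def)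
    then have "[y = y'] (mod int m)"
      using assms cong_mult_rcancel[of "int k - 1" "int m"] by (simp add: cong_minus_minus_iff coprime_commute)
    ultimately show "x = x' \<and> y = y'"
      using range by (simp add: cong_def)
  qed
qed

lemma Cset_disjoint:
  assumes "coprime (int k - 1) (int m)" and "x \<in> {0..<int m}" "y \<in> {0..<int m}" "x \<noteq> y"
  shows "Cset m n k x 1 \<inter> Cset m n k y 1 = {}"
  using mu_inj_on[OF assms(1)] assms(2-4) by (auto simp: Cset_one inj_on_def)

lemma card_UN_Cset:
  assumes "coprime (int k - 1) (int m)" and "T \<subseteq> {0..<int m}"
  shows "card (\<Union>x \<in> T. Cset m n k x 1) = card T * m"
proof -
  have "(\<Union>x \<in> T. Cset m n k x 1) = (\<lambda>(x, y). mu m n k x y) ` (T \<times> {0..<int m})"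
    by (auto simp: Cset_one)
  also have "card \<dots> = card (T \<times> {0..<int m})"
    using assms by (intro card_image inj_on_subset[OF mu_inj_on]) auto
  finally show ?thesis
    by (simp add: card_cartesian_product)
qed

lemma compose_mu_mod:
  "compose (carrier G) (mu m n k x' y') (mu m n k x y) = mu m n k (x * x' mod int m) (x' * y mod int m)"
  unfolding compose_mu by (intro mu_cong) (simp_all add: cong_def)

lemma map_sgrp_subset_UN_Cset:
  assumes "S \<subseteq> {0..<int m}"
  shows "map_sgrp (carrier G) (\<Union>r \<in> S. Cset m n k r 1) \<subseteq> (\<Union>x \<in> mult_sgrp m S. Cset m n k x 1)"
proof
  fix f assume "f \<in> map_sgrp (carrier G) (\<Union>r \<in> S. Cset m n k r 1)"
  then show "f \<in> (\<Union>x \<in> mult_sgrp m S. Cset m n k x 1)"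
  proof (induction rule: map_sgrp.induct)
    case (gen f)
    then obtain r where "r \<in> S" "f \<in> Cset m n k r 1"
      by blast
    moreover from \<open>r \<in> S\<close> have "r \<in> mult_sgrp m S"
      using mult_sgrp.gen[of r S m] assms by auto
    ultimately show ?case
      by blast
  next
    case (comp f g)
    then obtain x y x' y' where "x \<in> mult_sgrp m S" "f = mu m n k x y"
      and "x' \<in> mult_sgrp m S" "g = mu m n k x' y'"
      by (auto simp: Cset_one)
    then show ?case
      using m_pos by (auto simp: compose_mu_mod Cset_one intro!: bexI[of _ "x * x' mod int m"] mult_sgrp.mul)
  qed
qed

lemma ex_mu_in_map_sgrp:
  assumes "x \<in> mult_sgrp m S"
  shows "\<exists>y. mu m n k x y \<in> map_sgrp (carrier G) (\<Union>r \<in> S. Cset m n k r 1)"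
  using assms
proof (induction rule: mult_sgrp.induct)
  case (gen s)
  have "mu m n k s 0 \<in> map_sgrp (carrier G) (\<Union>r \<in> S. Cset m n k r 1)"
    using gen m_pos by (auto simp: Cset_one intro!: map_sgrp.gen)
  moreover have "mu m n k s 0 = mu m n k (s mod int m) 0"
    by (intro mu_cong) (simp_all add: cong_def)
  ultimately show ?case
    by auto
next
  case (mul a b)
  then obtain y y' where "mu m n k a y \<in> map_sgrp (carrier G) (\<Union>r \<in> S. Cset m n k r 1)"
    and "mu m n k b y' \<in> map_sgrp (carrier G) (\<Union>r \<in> S. Cset m n k r 1)"
    by blast
  from map_sgrp.comp[OF this] show ?case
    unfolding compose_mu_mod by blast
qed

lemma map_sgrp_eq_UN_Cset:
  assumes "S \<subseteq> {0..<int m}" and basic: "\<forall>x \<in> mult_sgrp m S. basic m S x"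
  shows "map_sgrp (carrier G) (\<Union>r \<in> S. Cset m n k r 1) = (\<Union>x \<in> mult_sgrp m S. Cset m n k x 1)"
    (is "?T = _")
proof
  show "?T \<subseteq> (\<Union>x \<in> mult_sgrp m S. Cset m n k x 1)"
    using assms(1) by (rule map_sgrp_subset_UN_Cset)
  show "(\<Union>x \<in> mult_sgrp m S. Cset m n k x 1) \<subseteq> ?T"
  proof
    fix f assume "f \<in> (\<Union>x \<in> mult_sgrp m S. Cset m n k x 1)"
    then obtain x z where x: "x \<in> mult_sgrp m S" and f: "f = mu m n k x z"
      by (auto simp: Cset_one)
    (* The basic orbit supplies x u in S; an element mu(u^-1, y) of the semigroup undoes u. *)
    obtain u where u: "u \<in> mult_sgrp m S" "coprime u (int m)" and r: "x * u mod int m \<in> S"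
      using basic x by (auto simp: basic_def orb_def units_in_def)
    obtain v where v: "v \<in> mult_sgrp m S" and uv: "[u * v = 1] (mod int m)"
      using mult_sgrp_unit_inverse[OF m_pos u] by blast
    have "mu m n k (x * u mod int m) (u * z mod int m) \<in> ?T"
      using r m_pos by (auto simp: Cset_one intro!: map_sgrp.gen)
    moreover obtain y where "mu m n k v y \<in> ?T"
      using ex_mu_in_map_sgrp[OF v] by blast
    ultimately have "compose (carrier G) (mu m n k v y) (mu m n k (x * u mod int m) (u * z mod int m)) \<in> ?T"
      by (rule map_sgrp.comp)
    also have "compose (carrier G) (mu m n k v y) (mu m n k (x * u mod int m) (u * z mod int m))
        = mu m n k (x * (u * v)) (u * v * z)"
      unfolding compose_mu by (intro mu_cong) (simp_all add: cong_def mod_mult_left_eq mod_mult_right_eq ac_simps)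
    also have "\<dots> = mu m n k x z"
      using cong_mult[OF cong_refl uv, of x] cong_mult[OF uv cong_refl, of z] by (intro mu_cong) simp_all
    finally show "f \<in> ?T"
      unfolding f .
  qed
qed

lemma map_sgrp_Cset_partition:
  assumes "coprime (int k - 1) (int m)" and "S \<subseteq> {0..<int m}"
    and "\<forall>x \<in> mult_sgrp m S. basic m S x"
  shows "map_sgrp (carrier G) (\<Union>r \<in> S. Cset m n k r 1) = (\<Union>x \<in> mult_sgrp m S. Cset m n k x 1)
    \<and> (\<forall>x \<in> mult_sgrp m S. \<forall>y \<in> mult_sgrp m S. x \<noteq> y \<longrightarrow> Cset m n k x 1 \<inter> Cset m n k y 1 = {})
    \<and> card (map_sgrp (carrier G) (\<Union>r \<in> S. Cset m n k r 1)) = card (mult_sgrp m S) * m"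
proof -
  have range: "mult_sgrp m S \<subseteq> {0..<int m}"
    using mult_sgrp_range[OF m_pos] by blast
  show ?thesis
    unfolding map_sgrp_eq_UN_Cset[OF assms(2,3)] card_UN_Cset[OF assms(1) range]
    using Cset_disjoint[OF assms(1)] range by blast
qed

end

theorem corollary4p12:
  fixes m n k :: nat
  assumes "m > 0" and "k > 0" and "coprime m (k - 1)" and "is_ind m k n"
  shows "((\<forall>x \<in> mult_sgrp m (Rset m n k). basic m (Rset m n k) x) \<longrightarrow>
            PG (Gmnk m n k) = (\<Union>x \<in> mult_sgrp m (Rset m n k). Cset m n k x 1)
          \<and> (\<forall>x \<in> mult_sgrp m (Rset m n k). \<forall>y \<in> mult_sgrp m (Rset m n k).
               x \<noteq> y \<longrightarrow> Cset m n k x 1 \<inter> Cset m n k y 1 = {})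
          \<and> card (PG (Gmnk m n k)) = card (mult_sgrp m (Rset m n k)) * m)
       \<and> ((\<forall>x \<in> mult_sgrp m (Lset m n k). basic m (Lset m n k) x) \<longrightarrow>
            LG (Gmnk m n k) = (\<Union>x \<in> mult_sgrp m (Lset m n k). Cset m n k x 1)
          \<and> (\<forall>x \<in> mult_sgrp m (Lset m n k). \<forall>y \<in> mult_sgrp m (Lset m n k).
               x \<noteq> y \<longrightarrow> Cset m n k x 1 \<inter> Cset m n k y 1 = {})
          \<and> card (LG (Gmnk m n k)) = card (mult_sgrp m (Lset m n k)) * m)"
proof -
  (* Only k^n = 1 (mod m) is needed from is_ind, not the minimality of n. *)
  interpret metacyclic m n k
    using assms(1,4) by unfold_locales (simp_all add: is_ind_def)
  have coprime: "coprime (int k - 1) (int m)"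
    using assms(2,3) by (simp add: coprime_commute flip: coprime_int_iff)
  have "Rset m n k \<subseteq> {0..<int m}" and "Lset m n k \<subseteq> {0..<int m}"
    using assms(1) by (auto simp: Rset_def Lset_def kk_def)
  from this[THEN map_sgrp_Cset_partition[OF coprime]] show ?thesis
    unfolding PG_def LG_def rho_image lam_image by blast
qed

end
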